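(* Let $(G,\sigma)$ be a finite connected signed graph satisfying $CD^{\sigma}(0,N)$ for some $N\in(1,\infty]$. Then every nonzero eigenvalue $\lambda^{\sigma}$ of $\Delta^{\sigma}$ satisfies \[ \lambda^\sigma\geq \frac{1}{4\left(1+\sqrt{(N-1)/N}\right)}\cdot\frac{1}{d(D+1)\lceil (D+1)/2\rceil}, \] where $d$ is the maximal vertex degree and $D$ the diameter of $G$, and $\sqrt{(N-1)/N}:=1$ when $N=\infty$.
   Context: $G=(V,E)$ is a finite simple connected graph with degrees $d_x$; $\sigma:E\to\{\pm1\}$, $\sigma_{xy}=\sigma(\{x,y\})$. Signed Laplacian $\Delta^{\sigma}f(x)=\frac{1}{d_x}\sum_{y\sim x}(\sigma_{xy}f(y)-f(x))$; $\Delta$ is the case $\sigma\equiv+1$; eigenvalues: $-\Delta^\sigma f=\lambda f$, $f\ne0$. $\Gamma^{\sigma}(f,g)=\frac12\{\Delta(fg)-g\Delta^{\sigma}f-f\Delta^{\sigma}g\}$, $\Gamma_2^{\sigma}(f,g)=\frac12\{\Delta\Gamma^{\sigma}(f,g)-\Gamma^{\sigma}(g,\Delta^{\sigma}f)-\Gamma^{\sigma}(f,\Delta^{\sigma}g)\}$. $CD^{\sigma}(K,N)$ means $\Gamma_2^{\sigma}(f,f)(x)\ge\frac1N(\Delta^\sigma f)^2(x)+K\Gamma^\sigma(f,f)(x)$ for all $f:V\to\mathbb{R}$, $x\in V$ ($\frac1N=0$ if $N=\infty$). $\lceil\cdot\rceil$ is the ceiling. *)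

theory Defs
  imports Complex_Main "HOL-Library.Extended_Real"
begin

definition simple_graph :: "'a set \<Rightarrow> ('a \<Rightarrow> 'a \<Rightarrow> bool) \<Rightarrow> bool" where
  "simple_graph V E \<longleftrightarrow> finite V \<and> (\<forall>x y. E x y \<longrightarrow> x \<in> V \<and> y \<in> V)
     \<and> (\<forall>x y. E x y \<longrightarrow> E y x) \<and> (\<forall>x. \<not> E x x)"

definition nbrs :: "'a set \<Rightarrow> ('a \<Rightarrow> 'a \<Rightarrow> bool) \<Rightarrow> 'a \<Rightarrow> 'a set" where
  "nbrs V E x = {y \<in> V. E x y}"

definition deg :: "'a set \<Rightarrow> ('a \<Rightarrow> 'a \<Rightarrow> bool) \<Rightarrow> 'a \<Rightarrow> nat" where
  "deg V E x = card (nbrs V E x)"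

definition max_deg :: "'a set \<Rightarrow> ('a \<Rightarrow> 'a \<Rightarrow> bool) \<Rightarrow> nat" where
  "max_deg V E = Max (deg V E ` V)"

fun walk :: "('a \<Rightarrow> 'a \<Rightarrow> bool) \<Rightarrow> 'a list \<Rightarrow> bool" where
  "walk E [] = False"
| "walk E [x] = True"
| "walk E (x # y # xs) = (E x y \<and> walk E (y # xs))"

definition connected_graph :: "'a set \<Rightarrow> ('a \<Rightarrow> 'a \<Rightarrow> bool) \<Rightarrow> bool" where
  "connected_graph V E \<longleftrightarrow>
     (\<forall>x\<in>V. \<forall>y\<in>V. \<exists>p. walk E p \<and> hd p = x \<and> last p = y)"

definition gdist :: "('a \<Rightarrow> 'a \<Rightarrow> bool) \<Rightarrow> 'a \<Rightarrow> 'a \<Rightarrow> nat" where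
  "gdist E x y = (LEAST n. \<exists>p. walk E p \<and> hd p = x \<and> last p = y \<and> length p = Suc n)"

definition diameter :: "'a set \<Rightarrow> ('a \<Rightarrow> 'a \<Rightarrow> bool) \<Rightarrow> nat" where
  "diameter V E = Max {gdist E x y | x y. x \<in> V \<and> y \<in> V}"

definition signature :: "('a \<Rightarrow> 'a \<Rightarrow> bool) \<Rightarrow> ('a \<Rightarrow> 'a \<Rightarrow> real) \<Rightarrow> bool" where
  "signature E \<sigma> \<longleftrightarrow> (\<forall>x y. E x y \<longrightarrow> \<sigma> x y = \<sigma> y x \<and> (\<sigma> x y = 1 \<or> \<sigma> x y = -1))"

definition sLap :: "'a set \<Rightarrow> ('a \<Rightarrow> 'a \<Rightarrow> bool) \<Rightarrow> ('a \<Rightarrow> 'a \<Rightarrow> real) \<Rightarrow> ('a \<Rightarrow> real) \<Rightarrow> 'a \<Rightarrow> real" where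
  "sLap V E \<sigma> f x = (1 / real (deg V E x)) * (\<Sum>y\<in>nbrs V E x. \<sigma> x y * f y - f x)"

definition Lap :: "'a set \<Rightarrow> ('a \<Rightarrow> 'a \<Rightarrow> bool) \<Rightarrow> ('a \<Rightarrow> real) \<Rightarrow> 'a \<Rightarrow> real" where
  "Lap V E = sLap V E (\<lambda>_ _. 1)"

definition sGamma :: "'a set \<Rightarrow> ('a \<Rightarrow> 'a \<Rightarrow> bool) \<Rightarrow> ('a \<Rightarrow> 'a \<Rightarrow> real) \<Rightarrow> ('a \<Rightarrow> real) \<Rightarrow> ('a \<Rightarrow> real) \<Rightarrow> 'a \<Rightarrow> real" where
  "sGamma V E \<sigma> f g x = (1/2) * (Lap V E (\<lambda>z. f z * g z) x
      - g x * sLap V E \<sigma> f x - f x * sLap V E \<sigma> g x)"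

definition sGamma2 :: "'a set \<Rightarrow> ('a \<Rightarrow> 'a \<Rightarrow> bool) \<Rightarrow> ('a \<Rightarrow> 'a \<Rightarrow> real) \<Rightarrow> ('a \<Rightarrow> real) \<Rightarrow> ('a \<Rightarrow> real) \<Rightarrow> 'a \<Rightarrow> real" where
  "sGamma2 V E \<sigma> f g x = (1/2) * (Lap V E (sGamma V E \<sigma> f g) x
      - sGamma V E \<sigma> g (sLap V E \<sigma> f) x - sGamma V E \<sigma> f (sLap V E \<sigma> g) x)"

definition invN :: "ereal \<Rightarrow> real" where
  "invN N = (if N = \<infinity> then 0 else 1 / real_of_ereal N)"

definition CD :: "'a set \<Rightarrow> ('a \<Rightarrow> 'a \<Rightarrow> bool) \<Rightarrow> ('a \<Rightarrow> 'a \<Rightarrow> real) \<Rightarrow> real \<Rightarrow> ereal \<Rightarrow> bool" where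
  "CD V E \<sigma> K N \<longleftrightarrow> (\<forall>f. \<forall>x\<in>V.
      sGamma2 V E \<sigma> f f x \<ge> invN N * (sLap V E \<sigma> f x)^2 + K * sGamma V E \<sigma> f f x)"

definition sqrtN :: "ereal \<Rightarrow> real" where
  "sqrtN N = (if N = \<infinity> then 1 else sqrt ((real_of_ereal N - 1) / real_of_ereal N))"

definition eigenvalue :: "'a set \<Rightarrow> ('a \<Rightarrow> 'a \<Rightarrow> bool) \<Rightarrow> ('a \<Rightarrow> 'a \<Rightarrow> real) \<Rightarrow> real \<Rightarrow> bool" where
  "eigenvalue V E \<sigma> lam \<longleftrightarrow> (\<exists>f. (\<exists>x\<in>V. f x \<noteq> 0) \<and> (\<forall>x\<in>V. - sLap V E \<sigma> f x = lam * f x))"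

end

theory Submission
  imports Defs
begin

(* Let f be an eigenfunction for lambda <> 0 and let |f| attain its maximum M at x0; the
   eigen-equation at x0 shows lambda > 0. Write s = sqrt((N-1)/N). The maximum principle for
   Gamma(f) + (1 + s) lambda f^2, combined with CD(0,N) at its maximum point, bounds the gradient by
   Gamma(f) <= 2 (1 + s) lambda M^2, so the edge energy sum_{z~y} (sigma_yz f(z) - f(y))^2 =
   2 d_y Gamma(f)(y) is at most B = 4 d (1 + s) lambda M^2.
   Some non-backtracking walk with at most D + 1 edges ends at x0 and starts at a vertex where f,
   transported to x0 by the signs along the walk, has the sign opposite to f(x0): otherwise the signs
   of shortest walks to x0 form a switching function tau, and tau f is a positive eigenfunction of
   the unsigned Laplacian with positive eigenvalue, contradicting the minimum principle. Along this
   walk M is at most the total variation of f. Two consecutive edges meet at a vertex in distinct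
   neighbours, so together they contribute at most sqrt(2 B); hence
   M^2 <= (D + 1) ceil((D + 1)/2) B. *)

fun walk_sign :: "('a \<Rightarrow> 'a \<Rightarrow> real) \<Rightarrow> 'a list \<Rightarrow> real" where
  "walk_sign \<sigma> (x # y # xs) = \<sigma> x y * walk_sign \<sigma> (y # xs)"
| "walk_sign \<sigma> _ = 1"

fun non_backtracking :: "'a list \<Rightarrow> bool" where
  "non_backtracking (x # y # z # xs) = (x \<noteq> z \<and> non_backtracking (y # z # xs))"
| "non_backtracking _ = True"

definition shortest_walk :: "('a \<Rightarrow> 'a \<Rightarrow> bool) \<Rightarrow> 'a \<Rightarrow> 'a \<Rightarrow> 'a list \<Rightarrow> bool" where
  "shortest_walk E x y p \<longleftrightarrow> walk E p \<and> hd p = x \<and> last p = y \<and> length p = Suc (gdist E x y)"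

lemma walk_not_Nil: "walk E p \<Longrightarrow> p \<noteq> []"
  by (cases p) auto

lemma walk_Cons: "q \<noteq> [] \<Longrightarrow> walk E (x # q) \<longleftrightarrow> E x (hd q) \<and> walk E q"
  by (cases q) auto

lemma walk_sign_Cons: "q \<noteq> [] \<Longrightarrow> walk_sign \<sigma> (x # q) = \<sigma> x (hd q) * walk_sign \<sigma> q"
  by (cases q) auto

lemma non_backtracking_Cons: "non_backtracking (x # p) \<Longrightarrow> non_backtracking p"
  by (induction p rule: non_backtracking.induct) auto

lemma backtracking_Cons:
  assumes "non_backtracking p" and "\<not> non_backtracking (z # p)"
  obtains r where "p = hd p # z # r"
  using assms by (cases p rule: non_backtracking.cases) auto

lemma walk_shorten_backtracking:
  "walk E p \<Longrightarrow> \<not> non_backtracking p \<Longrightarrow>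
   \<exists>q. walk E q \<and> hd q = hd p \<and> last q = last p \<and> length q < length p"
proof (induction p rule: non_backtracking.induct)
  case (1 x y z xs)
  show ?case
  proof (cases "x = z")
    case True
    then show ?thesis using "1.prems"(1) by (intro exI[of _ "z # xs"]) simp
  next
    case False
    then obtain q where q: "walk E q" "hd q = y" "last q = last (z # xs)" "length q < length (y # z # xs)"
      using "1.IH" "1.prems" by auto
    have "q \<noteq> []" using q(1) walk_not_Nil by blast
    then have "walk E (x # q)" using "1.prems"(1) q(1,2) walk_Cons[of q E x] by simp
    then show ?thesis using q \<open>q \<noteq> []\<close> by (intro exI[of _ "x # q"]) simp
  qed
qed simp_all

lemma gdist_le_length:
  assumes "walk E p"
  shows "gdist E (hd p) (last p) \<le> length p - 1"
proof -
  have "length p = Suc (length p - 1)" using walk_not_Nil[OF assms] by (cases p) auto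
  then show ?thesis unfolding gdist_def using assms by (intro Least_le) blast
qed

lemma shortest_walk_exists:
  assumes "connected_graph V E" and "x \<in> V" and "y \<in> V"
  shows "\<exists>p. shortest_walk E x y p"
proof -
  obtain p where p: "walk E p" "hd p = x" "last p = y"
    using assms unfolding connected_graph_def by blast
  moreover have "length p = Suc (length p - 1)" using walk_not_Nil[OF p(1)] by (cases p) auto
  ultimately have "\<exists>n p. walk E p \<and> hd p = x \<and> last p = y \<and> length p = Suc n"
    by blast
  then show ?thesis unfolding shortest_walk_def gdist_def by (rule LeastI_ex)
qed

lemma shortest_walks_to:
  assumes "connected_graph V E" and "x0 \<in> V"
  obtains Q where "\<And>y. y \<in> V \<Longrightarrow> shortest_walk E y x0 (Q y)"
  using shortest_walk_exists[OF assms(1) _ assms(2)] by metis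

lemma shortest_walk_non_backtracking:
  assumes "shortest_walk E x y p"
  shows "non_backtracking p"
proof (rule ccontr)
  assume "\<not> non_backtracking p"
  then obtain q where "walk E q" "hd q = x" "last q = y" "length q < length p"
    using assms walk_shorten_backtracking unfolding shortest_walk_def by blast
  moreover have "q \<noteq> []" using \<open>walk E q\<close> walk_not_Nil by blast
  ultimately show False
    using gdist_le_length[of E q] assms unfolding shortest_walk_def by (cases q) auto
qed

text \<open>If both extensions backtracked, each start point would be strictly closer to x0 than
  the other.\<close>

lemma shortest_walks_Cons_non_backtracking:
  assumes p: "shortest_walk E y x0 p" and q: "shortest_walk E z x0 q"
  shows "non_backtracking (z # p) \<or> non_backtracking (y # q)"
proof (rule ccontr)
  assume "\<not> ?thesis"
  then obtain r r' where "p = y # z # r" "q = z # y # r'"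
    using backtracking_Cons shortest_walk_non_backtracking p q
    unfolding shortest_walk_def by metis
  then have "gdist E z x0 < gdist E y x0" "gdist E y x0 < gdist E z x0"
    using gdist_le_length[of E "z # r"] gdist_le_length[of E "y # r'"] p q
    unfolding shortest_walk_def by auto
  then show False by simp
qed

lemma gdist_le_diameter:
  assumes "finite V" and "x \<in> V" and "y \<in> V"
  shows "gdist E x y \<le> diameter V E"
proof -
  have "{gdist E x y | x y. x \<in> V \<and> y \<in> V} = (\<lambda>(x, y). gdist E x y) ` (V \<times> V)" by auto
  then show ?thesis unfolding diameter_def using assms by (intro Max_ge) auto
qed

lemma sqrtN_pos: "1 < N \<Longrightarrow> 0 < sqrtN N"
  by (cases N) (auto simp: sqrtN_def)

lemma invN_eq_one_minus_sqrtN_sq: "1 < N \<Longrightarrow> invN N = 1 - (sqrtN N)^2"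
proof (cases N)
  case (real r)
  moreover assume "1 < N"
  ultimately have "1 < r" by simp
  then show ?thesis using real by (simp add: invN_def sqrtN_def field_simps)
qed (auto simp: sqrtN_def invN_def)

lemma Lap_square: "Lap V E (\<lambda>z. f z * f z) x = 2 * sGamma V E \<sigma> f f x + 2 * f x * sLap V E \<sigma> f x"
  unfolding sGamma_def by (simp add: algebra_simps)

lemma abs_add_le_sqrt_two_sum_squares:
  fixes a b :: real
  shows "\<bar>a\<bar> + \<bar>b\<bar> \<le> sqrt (2 * (a^2 + b^2))"
proof (rule real_le_rsqrt)
  have "0 \<le> (\<bar>a\<bar> - \<bar>b\<bar>)^2" by simp
  then show "(\<bar>a\<bar> + \<bar>b\<bar>)^2 \<le> 2 * (a^2 + b^2)"
    by (simp add: power2_eq_square algebra_simps abs_mult_self_eq)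
qed

lemma walk_bound_sq_le:
  fixes B :: real
  assumes "0 \<le> B"
  shows "(real (L div 2) * sqrt (2 * B) + real (L mod 2) * sqrt B)^2 \<le> real L * real ((L + 1) div 2) * B"
proof -
  have sqrt2: "sqrt 2 * sqrt 2 = 2" "sqrt 2 \<le> 3 / 2"
    by (simp, rule real_le_lsqrt) (simp_all add: power2_eq_square)
  have factor: "(real (L div 2) * sqrt 2 + real (L mod 2))^2 \<le> real L * real ((L + 1) div 2)"
  proof (cases "even L")
    case True
    then obtain m where "L = 2 * m" by blast
    then show ?thesis by (simp add: power2_eq_square algebra_simps sqrt2)
  next
    case False
    then obtain m where L: "L = 2 * m + 1" using oddE by blast
    have "2 * real m * sqrt 2 \<le> 2 * real m * (3 / 2)" using sqrt2 by (intro mult_left_mono) auto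
    moreover have "L div 2 = m" "L mod 2 = 1" "(L + 1) div 2 = m + 1" using L by auto
    ultimately show ?thesis using L by (simp add: power2_eq_square algebra_simps sqrt2)
  qed
  have "real (L div 2) * sqrt (2 * B) + real (L mod 2) * sqrt B
      = (real (L div 2) * sqrt 2 + real (L mod 2)) * sqrt B"
    by (simp add: real_sqrt_mult algebra_simps)
  then show ?thesis
    using mult_right_mono[OF factor assms] assms by (simp add: power_mult_distrib)
qed

lemma ceiling_half: "real_of_int \<lceil>real n / 2\<rceil> = real ((n + 1) div 2)"
proof (cases "even n")
  case True
  then show ?thesis by (auto elim!: evenE)
next
  case False
  then obtain m where "n = 2 * m + 1" using oddE by blast
  moreover have "\<lceil>real (2 * m + 1) / 2\<rceil> = int m + 1" by (rule ceiling_unique) simp_all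
  ultimately show ?thesis by simp
qed

locale signed_graph =
  fixes V :: "'a set" and E :: "'a \<Rightarrow> 'a \<Rightarrow> bool" and \<sigma> :: "'a \<Rightarrow> 'a \<Rightarrow> real"
  assumes simple: "simple_graph V E" and signature: "signature E \<sigma>"
begin

lemma finite_V: "finite V"
  using simple by (simp add: simple_graph_def)

lemma edge_in_V: "E x y \<Longrightarrow> x \<in> V \<and> y \<in> V"
  using simple by (simp add: simple_graph_def)

lemma edge_sym: "E x y \<Longrightarrow> E y x"
  using simple by (simp add: simple_graph_def)

lemma finite_nbrs: "finite (nbrs V E x)"
  using finite_V by (simp add: nbrs_def)

lemma nbrs_subset: "nbrs V E x \<subseteq> V"
  by (auto simp: nbrs_def)

lemma in_nbrs_iff: "y \<in> nbrs V E x \<longleftrightarrow> E x y"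
  using edge_in_V by (auto simp: nbrs_def)

lemma sign_cases: "E x y \<Longrightarrow> \<sigma> x y = 1 \<or> \<sigma> x y = -1"
  using signature by (simp add: signature_def)

lemma sign_sym: "E x y \<Longrightarrow> \<sigma> y x = \<sigma> x y"
  using signature unfolding signature_def by metis

lemma sign_square: "E x y \<Longrightarrow> \<sigma> x y * \<sigma> x y = 1"
  using sign_cases by fastforce

lemma exists_max:
  fixes g :: "'a \<Rightarrow> 'b::linorder"
  assumes "V \<noteq> {}"
  obtains x where "x \<in> V" and "\<forall>y\<in>V. g y \<le> g x"
proof -
  have "Max (g ` V) \<in> g ` V" using finite_V assms by simp
  then obtain x where "x \<in> V" "g x = Max (g ` V)" by (metis imageE)
  moreover have "g y \<le> Max (g ` V)" if "y \<in> V" for y using finite_V that by (intro Max_ge) auto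
  ultimately show thesis using that by metis
qed

lemma walk_sign_cases: "walk E p \<Longrightarrow> walk_sign \<sigma> p = 1 \<or> walk_sign \<sigma> p = -1"
proof (induction p)
  case (Cons x xs)
  then show ?case by (cases xs) (auto dest: sign_cases)
qed simp

definition eigenfunction :: "('a \<Rightarrow> real) \<Rightarrow> real \<Rightarrow> bool" where
  "eigenfunction f lam \<longleftrightarrow> (\<forall>x\<in>V. sLap V E \<sigma> f x = - lam * f x)"

definition edge_energy :: "('a \<Rightarrow> real) \<Rightarrow> 'a \<Rightarrow> real" where
  "edge_energy f y = (\<Sum>z\<in>nbrs V E y. (\<sigma> y z * f z - f y)^2)"

lemma sGamma_eq_sum:
  "sGamma V E \<sigma> f g x = 1 / 2 * (1 / real (deg V E x)) *
     (\<Sum>y\<in>nbrs V E x. (\<sigma> x y * f y - f x) * (\<sigma> x y * g y - g x))"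
proof -
  have "(\<Sum>y\<in>nbrs V E x. (\<sigma> x y * f y - f x) * (\<sigma> x y * g y - g x)) =
     (\<Sum>y\<in>nbrs V E x. (1 * (f y * g y) - f x * g x) - g x * (\<sigma> x y * f y - f x)
        - f x * (\<sigma> x y * g y - g x))"
  proof (rule sum.cong)
    fix y assume "y \<in> nbrs V E x"
    then have "\<sigma> x y * \<sigma> x y = 1" using sign_square in_nbrs_iff by blast
    then show "(\<sigma> x y * f y - f x) * (\<sigma> x y * g y - g x) =
       (1 * (f y * g y) - f x * g x) - g x * (\<sigma> x y * f y - f x) - f x * (\<sigma> x y * g y - g x)"
      by (simp add: algebra_simps)
  qed simp
  also have "\<dots> = (\<Sum>y\<in>nbrs V E x. 1 * (f y * g y) - f x * g x)
      - g x * (\<Sum>y\<in>nbrs V E x. \<sigma> x y * f y - f x) - f x * (\<Sum>y\<in>nbrs V E x. \<sigma> x y * g y - g x)"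
    by (simp add: sum_subtractf sum_distrib_left right_diff_distrib)
  finally have sum_eq: "(\<Sum>y\<in>nbrs V E x. (\<sigma> x y * f y - f x) * (\<sigma> x y * g y - g x)) = \<dots>" .
  show ?thesis
    unfolding sGamma_def Lap_def sLap_def sum_eq by (simp add: algebra_simps)
qed

lemma edge_energy_eq_sGamma: "edge_energy f x = 2 * real (deg V E x) * sGamma V E \<sigma> f f x"
proof (cases "deg V E x = 0")
  case True
  then have "nbrs V E x = {}" using finite_nbrs unfolding deg_def by simp
  then show ?thesis using True by (simp add: edge_energy_def)
next
  case False
  then show ?thesis by (simp add: edge_energy_def sGamma_eq_sum power2_eq_square)
qed

lemma sum_le_edge_energy:
  "S \<subseteq> nbrs V E y \<Longrightarrow> (\<Sum>z\<in>S. (\<sigma> y z * f z - f y)^2) \<le> edge_energy f y"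
  unfolding edge_energy_def by (rule sum_mono2[OF finite_nbrs]) auto

lemma sGamma_nonneg: "0 \<le> sGamma V E \<sigma> f f x"
  unfolding sGamma_eq_sum by (simp add: sum_nonneg)

lemma Lap_nonpos_at_max: "\<forall>y\<in>V. h y \<le> h x \<Longrightarrow> Lap V E h x \<le> 0"
  unfolding Lap_def sLap_def
  by (intro mult_nonneg_nonpos sum_nonpos) (use nbrs_subset in auto)

lemma Lap_nonneg_at_min: "\<forall>y\<in>V. h x \<le> h y \<Longrightarrow> 0 \<le> Lap V E h x"
  unfolding Lap_def sLap_def
  by (intro mult_nonneg_nonneg sum_nonneg) (use nbrs_subset in auto)

lemma Lap_add_scaled: "Lap V E (\<lambda>z. h z + c * k z) x = Lap V E h x + c * Lap V E k x"
  unfolding Lap_def sLap_def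
  by (simp add: sum.distrib sum_subtractf sum_distrib_left sum_divide_distrib algebra_simps)

lemma sGamma_sLap_eigenfunction:
  assumes "eigenfunction f lam" and "x \<in> V"
  shows "sGamma V E \<sigma> f (sLap V E \<sigma> f) x = - lam * sGamma V E \<sigma> f f x"
proof -
  have "(\<Sum>y\<in>nbrs V E x. (\<sigma> x y * f y - f x) * (\<sigma> x y * sLap V E \<sigma> f y - sLap V E \<sigma> f x)) =
        (\<Sum>y\<in>nbrs V E x. - lam * ((\<sigma> x y * f y - f x) * (\<sigma> x y * f y - f x)))"
    using assms by (intro sum.cong) (auto simp: eigenfunction_def nbrs_def algebra_simps)
  then show ?thesis unfolding sGamma_eq_sum by (simp add: sum_distrib_left)
qed

lemma sGamma2_eigenfunction:
  assumes "eigenfunction f lam" and "x \<in> V"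
  shows "sGamma2 V E \<sigma> f f x = Lap V E (sGamma V E \<sigma> f f) x / 2 + lam * sGamma V E \<sigma> f f x"
  unfolding sGamma2_def sGamma_sLap_eigenfunction[OF assms] by simp

text \<open>At a maximum point x of Gamma(f) + (1 + s) lam f^2 the maximum principle gives
  Lap Gamma(f) <= 2 (1 + s) lam (lam f^2 - Gamma(f)), while CD(0,N) gives
  (1 - s^2) lam^2 f^2 <= Lap Gamma(f) / 2 + lam Gamma(f); eliminating Lap Gamma(f) leaves
  s lam Gamma(f) <= s lam (1 + s) lam f^2.\<close>

lemma sGamma_le_at_max:
  assumes CD: "CD V E \<sigma> 0 N" and N: "1 < N" and eig: "eigenfunction f lam" and lam: "0 < lam"
    and x: "x \<in> V"
    and max: "\<forall>y\<in>V. sGamma V E \<sigma> f f y + (1 + sqrtN N) * lam * (f y)^2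
                   \<le> sGamma V E \<sigma> f f x + (1 + sqrtN N) * lam * (f x)^2"
  shows "sGamma V E \<sigma> f f x \<le> (1 + sqrtN N) * lam * (f x)^2"
proof -
  define s where "s = sqrtN N"
  define G where "G = sGamma V E \<sigma> f f"
  have sLap_x: "sLap V E \<sigma> f x = - lam * f x" using eig x by (simp add: eigenfunction_def)
  have "Lap V E (\<lambda>y. G y + ((1 + s) * lam) * (f y * f y)) x \<le> 0"
    using max by (intro Lap_nonpos_at_max) (simp add: G_def s_def power2_eq_square mult.assoc)
  then have A: "Lap V E G x + (1 + s) * lam * (2 * G x - 2 * lam * (f x)^2) \<le> 0"
    unfolding Lap_add_scaled Lap_square[where \<sigma> = \<sigma>] sLap_x G_def by (simp add: power2_eq_square mult_ac)
  have "invN N * (sLap V E \<sigma> f x)^2 \<le> sGamma2 V E \<sigma> f f x"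
    using CD x unfolding CD_def by fastforce
  then have B: "(1 - s^2) * lam^2 * (f x)^2 \<le> Lap V E G x / 2 + lam * G x"
    unfolding sLap_x sGamma2_eigenfunction[OF eig x] invN_eq_one_minus_sqrtN_sq[OF N]
    by (simp add: G_def s_def power_mult_distrib)
  have "s * lam * G x \<le> s * lam * ((1 + s) * lam * (f x)^2)"
    using A B by (simp add: algebra_simps power2_eq_square)
  then show ?thesis
    using sqrtN_pos[OF N] lam by (simp add: G_def s_def mult_le_cancel_left_pos)
qed

lemma gradient_bound:
  assumes CD: "CD V E \<sigma> 0 N" and N: "1 < N" and eig: "eigenfunction f lam" and lam: "0 < lam"
    and bound: "\<forall>z\<in>V. \<bar>f z\<bar> \<le> M" and y: "y \<in> V"
  shows "sGamma V E \<sigma> f f y \<le> 2 * (1 + sqrtN N) * lam * M^2"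
proof -
  define F where "F z = sGamma V E \<sigma> f f z + (1 + sqrtN N) * lam * (f z)^2" for z
  obtain x where x: "x \<in> V" and max: "\<forall>z\<in>V. F z \<le> F x"
    using exists_max y by blast
  have c_nonneg: "0 \<le> (1 + sqrtN N) * lam" using sqrtN_pos[OF N] lam by simp
  have "sGamma V E \<sigma> f f y \<le> F y" using c_nonneg by (simp add: F_def)
  also have "\<dots> \<le> F x" using max y by blast
  also have "\<dots> \<le> 2 * ((1 + sqrtN N) * lam) * (f x)^2"
    using sGamma_le_at_max[OF CD N eig lam x] max unfolding F_def by linarith
  also have "\<dots> \<le> 2 * ((1 + sqrtN N) * lam) * M^2"
  proof -
    have "\<bar>f x\<bar> \<le> \<bar>M\<bar>" using bound x by fastforce
    then show ?thesis using c_nonneg by (intro mult_left_mono) (auto simp: abs_le_square_iff)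
  qed
  finally show ?thesis by (simp only: mult.assoc)
qed

lemma edge_energy_bound:
  assumes CD: "CD V E \<sigma> 0 N" and N: "1 < N" and eig: "eigenfunction f lam" and lam: "0 < lam"
    and bound: "\<forall>z\<in>V. \<bar>f z\<bar> \<le> M" and y: "y \<in> V"
  shows "edge_energy f y \<le> 4 * real (max_deg V E) * (1 + sqrtN N) * lam * M^2"
proof -
  have "deg V E y \<le> max_deg V E"
    unfolding max_deg_def using finite_V y by (intro Max_ge) auto
  then have "2 * real (deg V E y) * sGamma V E \<sigma> f f y
      \<le> 2 * real (max_deg V E) * (2 * (1 + sqrtN N) * lam * M^2)"
    using gradient_bound[OF CD N eig lam bound y] sGamma_nonneg by (intro mult_mono) auto
  then show ?thesis unfolding edge_energy_eq_sGamma by (simp add: algebra_simps)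
qed

lemma sLap_at_abs_max:
  assumes x: "x \<in> V" and max: "\<forall>y\<in>V. \<bar>f y\<bar> \<le> \<bar>f x\<bar>"
  shows "f x * sLap V E \<sigma> f x \<le> 0"
proof -
  have term_nonpos: "f x * (\<sigma> x y * f y - f x) \<le> 0" if y: "y \<in> nbrs V E x" for y
  proof -
    have "f x * (\<sigma> x y * f y) \<le> \<bar>f x * (\<sigma> x y * f y)\<bar>" by (rule abs_ge_self)
    also have "\<dots> = \<bar>f x\<bar> * \<bar>f y\<bar>" using sign_cases[of x y] y in_nbrs_iff by (auto simp: abs_mult)
    also have "\<dots> \<le> \<bar>f x\<bar> * \<bar>f x\<bar>" using max y nbrs_subset by (intro mult_left_mono) auto
    finally show ?thesis by (simp add: abs_mult_self_eq algebra_simps)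
  qed
  have "(\<Sum>y\<in>nbrs V E x. f x * (\<sigma> x y * f y - f x)) \<le> 0"
    using term_nonpos by (rule sum_nonpos)
  then have "1 / real (deg V E x) * (\<Sum>y\<in>nbrs V E x. f x * (\<sigma> x y * f y - f x)) \<le> 0"
    by (rule mult_nonneg_nonpos[rotated]) simp
  then show ?thesis unfolding sLap_def by (simp add: sum_distrib_left)
qed

lemma eigenvalue_nonneg:
  assumes "eigenfunction f lam" and "x \<in> V" and "\<forall>y\<in>V. \<bar>f y\<bar> \<le> \<bar>f x\<bar>" and "f x \<noteq> 0"
  shows "0 \<le> lam"
proof -
  have "0 \<le> lam * (f x * f x)"
    using sLap_at_abs_max[OF assms(2,3)] assms(1,2) by (simp add: eigenfunction_def algebra_simps)
  moreover have "0 < f x * f x" using assms(4) by (auto simp: zero_less_mult_iff linorder_neq_iff)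
  ultimately show ?thesis by (simp add: zero_le_mult_iff)
qed

lemma Lap_switching:
  assumes "\<forall>y z. E y z \<longrightarrow> \<tau> z = \<sigma> y z * \<tau> y"
  shows "Lap V E (\<lambda>z. \<tau> z * f z) x = \<tau> x * sLap V E \<sigma> f x"
proof -
  have "(\<Sum>y\<in>nbrs V E x. 1 * (\<tau> y * f y) - \<tau> x * f x) = (\<Sum>y\<in>nbrs V E x. \<tau> x * (\<sigma> x y * f y - f x))"
    using assms by (intro sum.cong) (auto simp: in_nbrs_iff algebra_simps)
  then show ?thesis unfolding Lap_def sLap_def by (simp add: sum_distrib_left)
qed

lemma no_positive_Lap_eigenfunction:
  assumes "V \<noteq> {}" and "0 < lam" and "\<forall>y\<in>V. Lap V E h y = - lam * h y" and "\<forall>y\<in>V. 0 < h y"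
  shows False
proof -
  obtain x where x: "x \<in> V" and "\<forall>y\<in>V. - h y \<le> - h x"
    using exists_max[OF assms(1), of "\<lambda>y. - h y"] by blast
  then have "0 \<le> Lap V E h x" by (intro Lap_nonneg_at_min) auto
  moreover have "0 < lam * h x" using assms(2,4) x by simp
  ultimately show False using assms(3) x by simp
qed

lemma shortest_walk_signs_switching:
  assumes x0: "x0 \<in> V" and Q: "\<And>y. y \<in> V \<Longrightarrow> shortest_walk E y x0 (Q y)"
    and unique: "\<And>p. walk E p \<Longrightarrow> non_backtracking p \<Longrightarrow> hd p \<in> V \<Longrightarrow> last p = x0 \<Longrightarrow>
                   length p \<le> diameter V E + 2 \<Longrightarrow> walk_sign \<sigma> p = walk_sign \<sigma> (Q (hd p))"
    and yz: "E y z"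
  shows "walk_sign \<sigma> (Q z) = \<sigma> y z * walk_sign \<sigma> (Q y)"
proof -
  have extend: "walk_sign \<sigma> (Q b) = \<sigma> b a * walk_sign \<sigma> (Q a)"
    if ba: "E b a" and nb: "non_backtracking (b # Q a)" for a b
  proof -
    have a: "a \<in> V" "b \<in> V" using edge_in_V ba by auto
    note Qa = Q[OF a(1), unfolded shortest_walk_def]
    have ne: "Q a \<noteq> []" using Qa walk_not_Nil by blast
    have "walk E (b # Q a)" using Qa ba walk_Cons[OF ne] by simp
    moreover have "length (b # Q a) \<le> diameter V E + 2"
      using Qa gdist_le_diameter[OF finite_V a(1) x0] by simp
    ultimately have "walk_sign \<sigma> (b # Q a) = walk_sign \<sigma> (Q b)"
      using unique[of "b # Q a"] nb a Qa ne by simp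
    then show ?thesis using walk_sign_Cons[OF ne] Qa by simp
  qed
  consider "non_backtracking (z # Q y)" | "non_backtracking (y # Q z)"
    using shortest_walks_Cons_non_backtracking[OF Q Q] edge_in_V[OF yz] by blast
  then show ?thesis
  proof cases
    case 1
    then show ?thesis using extend[OF edge_sym[OF yz]] sign_sym[OF yz] by simp
  next
    case 2
    then show ?thesis using extend[OF yz] sign_square[OF yz] by (simp add: mult.assoc[symmetric])
  qed
qed

lemma sign_changing_walk_exists:
  assumes conn: "connected_graph V E" and eig: "eigenfunction f lam" and lam: "0 < lam"
    and x0: "x0 \<in> V"
  obtains p where "walk E p" "non_backtracking p" "hd p \<in> V" "last p = x0"
    "length p \<le> diameter V E + 2" "f x0 * (walk_sign \<sigma> p * f (hd p)) \<le> 0"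
proof -
  define short where "short p \<longleftrightarrow> walk E p \<and> non_backtracking p \<and> hd p \<in> V \<and> last p = x0
      \<and> length p \<le> diameter V E + 2" for p
  have "\<exists>p. short p \<and> f x0 * (walk_sign \<sigma> p * f (hd p)) \<le> 0"
  proof (rule ccontr)
    assume "\<not> ?thesis"
    then have pos: "short p \<Longrightarrow> 0 < f x0 * (walk_sign \<sigma> p * f (hd p))" for p by force
    obtain Q where Q: "\<And>y. y \<in> V \<Longrightarrow> shortest_walk E y x0 (Q y)"
      using shortest_walks_to[OF conn x0] by blast
    have short_Q: "short (Q y)" and hd_Q: "hd (Q y) = y" if "y \<in> V" for y
      using that shortest_walk_non_backtracking[OF Q[OF that]] Q[OF that]
        gdist_le_diameter[OF finite_V that x0, of E]
      unfolding shortest_walk_def short_def by auto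
    have same_sign: "walk_sign \<sigma> p = walk_sign \<sigma> (Q (hd p))" if p: "short p" for p
    proof -
      have "hd p \<in> V" "walk E p" using p unfolding short_def by auto
      then have "0 < f x0 * (walk_sign \<sigma> (Q (hd p)) * f (hd p))"
        "walk_sign \<sigma> p \<in> {1, -1}" "walk_sign \<sigma> (Q (hd p)) \<in> {1, -1}"
        using pos[OF short_Q] hd_Q walk_sign_cases short_Q unfolding short_def by auto
      then show ?thesis using pos[OF p] by auto
    qed
    have "walk_sign \<sigma> (Q z) = \<sigma> y z * walk_sign \<sigma> (Q y)" if "E y z" for y z
      by (rule shortest_walk_signs_switching[OF x0 Q _ that]) (auto simp: short_def intro: same_sign)
    then have switching: "\<forall>y z. E y z \<longrightarrow>
        f x0 * walk_sign \<sigma> (Q z) = \<sigma> y z * (f x0 * walk_sign \<sigma> (Q y))"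
      by simp
    define h where "h y = f x0 * walk_sign \<sigma> (Q y) * f y" for y
    have "Lap V E h y = - lam * h y" if "y \<in> V" for y
      using Lap_switching[OF switching] eig that unfolding h_def eigenfunction_def by simp
    moreover have "0 < h y" if "y \<in> V" for y
      using pos[OF short_Q[OF that]] hd_Q[OF that] unfolding h_def by (simp add: mult.assoc)
    ultimately show False using no_positive_Lap_eigenfunction x0 lam by blast
  qed
  then show thesis using that unfolding short_def by blast
qed

lemma edge_variation_le:
  assumes energy: "\<forall>y\<in>V. edge_energy f y \<le> B" and xy: "E x y"
  shows "\<bar>f x - \<sigma> x y * f y\<bar> \<le> sqrt B"
proof -
  have "(\<sigma> y x * f x - f y)^2 \<le> edge_energy f y"
    using sum_le_edge_energy[of "{x}" y f] edge_sym[OF xy] in_nbrs_iff by simp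
  then have "(\<sigma> y x * f x - f y)^2 \<le> B" using energy edge_in_V[OF xy] by fastforce
  moreover have "\<bar>f x - \<sigma> x y * f y\<bar> = \<bar>\<sigma> y x * f x - f y\<bar>"
    using sign_cases[OF xy] sign_sym[OF xy] by auto
  ultimately show ?thesis by (simp add: real_le_rsqrt)
qed

text \<open>The two edges meet at y in distinct neighbours, so both terms appear in the edge energy
  at y; this is why the walks have to be non-backtracking.\<close>

lemma two_edge_variation_le:
  assumes energy: "\<forall>y\<in>V. edge_energy f y \<le> B" and xy: "E x y" and yz: "E y z" and "x \<noteq> z"
  shows "\<bar>f x - \<sigma> x y * \<sigma> y z * f z\<bar> \<le> sqrt (2 * B)"
proof -
  define a b where "a = \<sigma> y x * f x - f y" and "b = \<sigma> y z * f z - f y"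
  have "a^2 + b^2 \<le> edge_energy f y"
    using sum_le_edge_energy[of "{x, z}" y f] edge_sym[OF xy] yz \<open>x \<noteq> z\<close> in_nbrs_iff
    by (simp add: a_def b_def)
  then have "a^2 + b^2 \<le> B" using energy edge_in_V[OF xy] by fastforce
  then have "\<bar>a\<bar> + \<bar>b\<bar> \<le> sqrt (2 * B)"
    using abs_add_le_sqrt_two_sum_squares[of a b] by (smt (verit) real_sqrt_le_mono)
  moreover have "f x - \<sigma> x y * \<sigma> y z * f z = \<sigma> x y * a - \<sigma> x y * b"
    using sign_sym[OF xy] sign_square[OF xy] by (simp add: a_def b_def algebra_simps)
  moreover have "\<bar>\<sigma> x y * a - \<sigma> x y * b\<bar> \<le> \<bar>a\<bar> + \<bar>b\<bar>"
    using sign_cases[OF xy] by auto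
  ultimately show ?thesis by simp
qed

lemma walk_variation_bound:
  assumes energy: "\<forall>y\<in>V. edge_energy f y \<le> B"
  shows "walk E p \<Longrightarrow> non_backtracking p \<Longrightarrow>
    \<bar>f (hd p) - walk_sign \<sigma> p * f (last p)\<bar>
      \<le> real ((length p - 1) div 2) * sqrt (2 * B) + real ((length p - 1) mod 2) * sqrt B"
proof (induction p rule: induct_list012)
  case (3 x y zs)
  show ?case
  proof (cases zs)
    case Nil
    then show ?thesis using edge_variation_le[OF energy] "3.prems" by simp
  next
    case (Cons z xs)
    define R where "R = f z - walk_sign \<sigma> zs * f (last zs)"
    have IH: "\<bar>R\<bar> \<le> real ((length zs - 1) div 2) * sqrt (2 * B) + real ((length zs - 1) mod 2) * sqrt B"
      using "3.IH"(1) "3.prems" non_backtracking_Cons[of y zs] Cons by (auto simp: R_def)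
    have split: "f x - walk_sign \<sigma> (x # y # zs) * f (last (x # y # zs))
        = (f x - \<sigma> x y * \<sigma> y z * f z) + \<sigma> x y * \<sigma> y z * R"
      using Cons by (simp add: R_def algebra_simps)
    have "\<bar>\<sigma> x y * \<sigma> y z * R\<bar> = \<bar>R\<bar>"
      using sign_cases[of x y] sign_cases[of y z] "3.prems" Cons by (auto simp: abs_mult)
    then have "\<bar>f x - walk_sign \<sigma> (x # y # zs) * f (last (x # y # zs))\<bar>
        \<le> \<bar>f x - \<sigma> x y * \<sigma> y z * f z\<bar> + \<bar>R\<bar>"
      unfolding split by (metis abs_triangle_ineq)
    also have "\<dots> \<le> sqrt (2 * B) + \<bar>R\<bar>"
      using two_edge_variation_le[OF energy] "3.prems" Cons by auto
    finally show ?thesis using IH Cons by (simp add: algebra_simps)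
  qed
qed simp_all

lemma abs_max_sq_le_energy:
  assumes conn: "connected_graph V E" and eig: "eigenfunction f lam" and lam: "0 < lam"
    and x0: "x0 \<in> V" and energy: "\<forall>y\<in>V. edge_energy f y \<le> B"
  shows "(f x0)^2 \<le> real (diameter V E + 1) * real ((diameter V E + 2) div 2) * B"
proof -
  obtain p where p: "walk E p" "non_backtracking p" "hd p \<in> V" "last p = x0"
      "length p \<le> diameter V E + 2" "f x0 * (walk_sign \<sigma> p * f (hd p)) \<le> 0"
    using sign_changing_walk_exists[OF conn eig lam x0] by blast
  define L where "L = length p - 1"
  have B: "0 \<le> B"
    using energy x0 unfolding edge_energy_def by (meson order_trans sum_nonneg zero_le_power2)
  have "\<bar>f x0\<bar> \<le> \<bar>f (hd p) - walk_sign \<sigma> p * f x0\<bar>"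
    using p(6) walk_sign_cases[OF p(1)] by (auto simp: mult_le_0_iff abs_if)
  also have "\<dots> \<le> real (L div 2) * sqrt (2 * B) + real (L mod 2) * sqrt B"
    using walk_variation_bound[OF energy p(1,2)] p(4) by (simp add: L_def)
  finally have "(f x0)^2 \<le> (real (L div 2) * sqrt (2 * B) + real (L mod 2) * sqrt B)^2"
    by (metis abs_ge_zero power2_abs power_mono)
  also have "\<dots> \<le> real L * real ((L + 1) div 2) * B" by (rule walk_bound_sq_le[OF B])
  also have "\<dots> \<le> real (diameter V E + 1) * real ((diameter V E + 2) div 2) * B"
  proof (rule mult_right_mono[OF _ B])
    have "L * ((L + 1) div 2) \<le> (diameter V E + 1) * ((diameter V E + 2) div 2)"
      using p(5) unfolding L_def by (intro mult_le_mono div_le_mono) auto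
    then show "real L * real ((L + 1) div 2) \<le> real (diameter V E + 1) * real ((diameter V E + 2) div 2)"
      by (metis of_nat_le_iff of_nat_mult)
  qed
  finally show ?thesis .
qed

end

theorem corollary3p9:
  fixes V :: "'a set" and E :: "'a \<Rightarrow> 'a \<Rightarrow> bool" and \<sigma> :: "'a \<Rightarrow> 'a \<Rightarrow> real"
    and N :: ereal and lam :: real
  assumes "simple_graph V E" and "connected_graph V E" and "signature E \<sigma>"
    and "1 < N" and "CD V E \<sigma> 0 N"
    and "eigenvalue V E \<sigma> lam" and "lam \<noteq> 0"
  shows "lam \<ge> 1 / (4 * (1 + sqrtN N)) *
           (1 / (real (max_deg V E) * real (diameter V E + 1)
                 * real_of_int \<lceil>real (diameter V E + 1) / 2\<rceil>))"
proof -
  interpret signed_graph V E \<sigma> using assms(1,3) by unfold_locales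
  obtain f where nonzero: "\<exists>x\<in>V. f x \<noteq> 0" and eig: "eigenfunction f lam"
    using assms(6) unfolding eigenvalue_def eigenfunction_def by force
  obtain x0 where x0: "x0 \<in> V" and max: "\<forall>y\<in>V. \<bar>f y\<bar> \<le> \<bar>f x0\<bar>"
    using exists_max[of "\<lambda>y. \<bar>f y\<bar>"] nonzero by blast
  have fx0: "f x0 \<noteq> 0" using nonzero max by force
  have lam: "0 < lam" using eigenvalue_nonneg[OF eig x0 max fx0] assms(7) by simp
  define P where "P = 4 * (1 + sqrtN N) * (real (max_deg V E) * real (diameter V E + 1)
      * real ((diameter V E + 2) div 2))"
  have "(f x0)^2 \<le> real (diameter V E + 1) * real ((diameter V E + 2) div 2)
      * (4 * real (max_deg V E) * (1 + sqrtN N) * lam * \<bar>f x0\<bar>^2)"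
    using abs_max_sq_le_energy[OF assms(2) eig lam x0]
      edge_energy_bound[OF assms(5,4) eig lam max] by blast
  then have "(f x0)^2 * 1 \<le> (f x0)^2 * (P * lam)" by (simp add: P_def algebra_simps)
  then have "1 \<le> P * lam" using fx0 by simp
  moreover have "0 < P" using \<open>1 \<le> P * lam\<close> lam by (smt (verit) mult_nonpos_nonneg)
  ultimately have "1 / P \<le> lam" by (simp add: divide_le_eq mult.commute)
  then show ?thesis unfolding P_def ceiling_half by simp
qed

end
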